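(* Fix $1\le a<b$ and consider the following instance: $n=2$ buyers; $d=2$; buyer type set $\Theta:=\{(w,B)\in\mathbb{R}^2_{\ge0}\times\mathbb{R}_+:\ a\le\|w\|\le b,\ B=\frac{2\|w\|-w_1-w_2}{\pi\|w\|}\}$ with $G$ the distribution under which $w$ is uniform (w.r.t. Lebesgue measure on $\mathbb{R}^2$) on $\{w\in\mathbb{R}^2_{\ge0}:a\le\|w\|\le b\}$ and $B$ is the function of $w$ above; item types $A:=\{e_1,e_2\}$ with $F$ uniform on $A$; reserve prices $r\equiv0$. Then the pacing function $\mu(w,B):=\|w\|-1$ is such that the value-pacing-based strategy $\beta^\mu$ is a Symmetric First Price Equilibrium.
   Context: $\|\cdot\|$ is the Euclidean norm, $e_1,e_2$ the standard basis vectors. Buyer $(w,B)$ values item $\alpha$ at $w^T\alpha$. For a pacing function $\mu:\Theta\to\mathbb{R}_{\ge0}$ and item $\alpha$, $\lambda^\mu_\alpha$ is the distribution of $w^T\alpha/(1+\mu(w,B))$ when $(w,B)\sim G$, and $H^\mu_\alpha$ the distribution of the maximum of $n-1$ i.i.d. draws from $\lambda^\mu_\alpha$, $H^\mu_\alpha(x):=\lambda^\mu_\alpha((-\infty,x])^{n-1}$. With $r\equiv0$: $\sigma^\mu_\alpha(x)=x-\int_0^x H^\mu_\alpha(s)/H^\mu_\alpha(x)\,ds$ if $H^\mu_\alpha(x)>0$ and $\sigma^\mu_\alpha(x)=0$ otherwise; $\beta^\mu(w,B,\alpha):=\sigma^\mu_\alpha(w^T\alpha/(1+\mu(w,B)))$.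 A strategy $\beta^*:\Theta\times A\to\mathbb{R}_{\ge0}$ is a Symmetric First Price Equilibrium if for $G$-almost every $(w,B)$, $\alpha\mapsto\beta^*(w,B,\alpha)$ is an optimal solution of $\max_{b:A\to\mathbb{R}_{\ge0}}\mathbb{E}_{\alpha,\{\theta_i\}_{i=1}^{n-1}}[(w^T\alpha-b(\alpha))\mathbf 1\{b(\alpha)\ge\max(r(\alpha),\{\beta^*(\theta_i,\alpha)\}_i)\}]$ subject to $\mathbb{E}_{\alpha,\{\theta_i\}}[b(\alpha)\mathbf 1\{b(\alpha)\ge\max(r(\alpha),\{\beta^*(\theta_i,\alpha)\}_i)\}]\le B$, where $\alpha\sim F$ and $\theta_1,\dots,\theta_{n-1}\sim G$ are i.i.d. and independent (all highest bidders at or above the reserve are treated as winning). *)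

theory Defs
  imports "HOL-Probability.Probability"
begin

text \<open>Buyer types are pairs (w, B) with w :: real \<times> real (the norm on real \<times> real is
the Euclidean norm) and budget B :: real.  Items are vectors alpha :: real \<times> real.\<close>

type_synonym btype = "(real \<times> real) \<times> real"
type_synonym item = "real \<times> real"

definition val :: "btype \<Rightarrow> item \<Rightarrow> real" where
  "val \<theta> \<alpha> = fst \<theta> \<bullet> \<alpha>"

definition paced_dist :: "btype measure \<Rightarrow> (btype \<Rightarrow> real) \<Rightarrow> item \<Rightarrow> real measure" where
  "paced_dist G \<mu> \<alpha> = distr G borel (\<lambda>\<theta>. val \<theta> \<alpha> / (1 + \<mu> \<theta>))"

definition Hdist :: "nat \<Rightarrow> btype measure \<Rightarrow> (btype \<Rightarrow> real) \<Rightarrow> item \<Rightarrow> real \<Rightarrow> real" where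
  "Hdist n G \<mu> \<alpha> x = measure (paced_dist G \<mu> \<alpha>) {..x} ^ (n - 1)"

text \<open>sigma^mu_alpha with reserve r = 0.\<close>
definition sigma_bid :: "nat \<Rightarrow> btype measure \<Rightarrow> (btype \<Rightarrow> real) \<Rightarrow> item \<Rightarrow> real \<Rightarrow> real" where
  "sigma_bid n G \<mu> \<alpha> x =
     (if Hdist n G \<mu> \<alpha> x > 0
      then x - (LBINT s:{0..x}. Hdist n G \<mu> \<alpha> s / Hdist n G \<mu> \<alpha> x)
      else 0)"

definition beta_pacing :: "nat \<Rightarrow> btype measure \<Rightarrow> (btype \<Rightarrow> real) \<Rightarrow> btype \<Rightarrow> item \<Rightarrow> real" where
  "beta_pacing n G \<mu> \<theta> \<alpha> = sigma_bid n G \<mu> \<alpha> (val \<theta> \<alpha> / (1 + \<mu> \<theta>))"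

text \<open>Winning event: bid at least max(r(alpha), beta(theta_i, alpha) for i = 1..n-1)
  (ties count as wins); the n-1 opponents are indexed by {..<n-1}.\<close>
definition wins :: "nat \<Rightarrow> (item \<Rightarrow> real) \<Rightarrow> (btype \<Rightarrow> item \<Rightarrow> real) \<Rightarrow> real \<Rightarrow> item
                     \<Rightarrow> (nat \<Rightarrow> btype) \<Rightarrow> bool" where
  "wins n r \<beta> bid \<alpha> \<theta>s \<longleftrightarrow> r \<alpha> \<le> bid \<and> (\<forall>i<n - 1. \<beta> (\<theta>s i) \<alpha> \<le> bid)"

definition exp_utility :: "nat \<Rightarrow> btype measure \<Rightarrow> item measure \<Rightarrow> (item \<Rightarrow> real)
     \<Rightarrow> (btype \<Rightarrow> item \<Rightarrow> real) \<Rightarrow> btype \<Rightarrow> (item \<Rightarrow> real) \<Rightarrow> real" where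
  "exp_utility n G F r \<beta> \<theta> b =
     (\<integral>\<alpha>. (\<integral>\<theta>s. (val \<theta> \<alpha> - b \<alpha>) * (if wins n r \<beta> (b \<alpha>) \<alpha> \<theta>s then 1 else 0)
        \<partial>(PiM {..<n - 1} (\<lambda>_. G))) \<partial>F)"

definition exp_payment :: "nat \<Rightarrow> btype measure \<Rightarrow> item measure \<Rightarrow> (item \<Rightarrow> real)
     \<Rightarrow> (btype \<Rightarrow> item \<Rightarrow> real) \<Rightarrow> (item \<Rightarrow> real) \<Rightarrow> real" where
  "exp_payment n G F r \<beta> b =
     (\<integral>\<alpha>. (\<integral>\<theta>s. b \<alpha> * (if wins n r \<beta> (b \<alpha>) \<alpha> \<theta>s then 1 else 0)
        \<partial>(PiM {..<n - 1} (\<lambda>_. G))) \<partial>F)"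

definition is_SFPE :: "nat \<Rightarrow> btype measure \<Rightarrow> item measure \<Rightarrow> btype set \<Rightarrow> item set
     \<Rightarrow> (item \<Rightarrow> real) \<Rightarrow> (btype \<Rightarrow> item \<Rightarrow> real) \<Rightarrow> bool" where
  "is_SFPE n G F Theta A r \<beta> \<longleftrightarrow>
     (\<forall>\<theta>\<in>Theta. \<forall>\<alpha>\<in>A. 0 \<le> \<beta> \<theta> \<alpha>) \<and>
     (AE \<theta> in G.
        exp_payment n G F r \<beta> (\<beta> \<theta>) \<le> snd \<theta> \<and>
        (\<forall>b. (\<forall>\<alpha>\<in>A. 0 \<le> b \<alpha>) \<and> exp_payment n G F r \<beta> b \<le> snd \<theta>
             \<longrightarrow> exp_utility n G F r \<beta> \<theta> b \<le> exp_utility n G F r \<beta> \<theta> (\<beta> \<theta>)))"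

definition budget_ex :: "real \<times> real \<Rightarrow> real" where
  "budget_ex w = (2 * norm w - fst w - snd w) / (pi * norm w)"

definition W_ex :: "real \<Rightarrow> real \<Rightarrow> (real \<times> real) set" where
  "W_ex a b = {w. 0 \<le> fst w \<and> 0 \<le> snd w \<and> a \<le> norm w \<and> norm w \<le> b}"

definition Theta_ex :: "real \<Rightarrow> real \<Rightarrow> btype set" where
  "Theta_ex a b = {(w, B). w \<in> W_ex a b \<and> 0 < B \<and> B = budget_ex w}"

definition G_ex :: "real \<Rightarrow> real \<Rightarrow> btype measure" where
  "G_ex a b = distr (uniform_measure lborel (W_ex a b)) borel (\<lambda>w. (w, budget_ex w))"

definition e1 :: item where "e1 = (1, 0)"
definition e2 :: item where "e2 = (0, 1)"

definition F_ex :: "item measure" where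
  "F_ex = measure_pmf (pmf_of_set {e1, e2})"

definition mu_ex :: "btype \<Rightarrow> real" where
  "mu_ex \<theta> = norm (fst \<theta>) - 1"

end

theory Submission
  imports Defs
begin

(* Since \<mu>(w, B) = norm w - 1, the paced value of item e_i is the cosine of the angle between
   w and e_i. For w uniform on the quarter annulus this angle is uniform on [0, pi/2], so the
   paced values have distribution function H(y) = (2/pi) arcsin y on [0, 1], and \<beta>^\<mu> bids
   \<sigma>(z) = (1 - sqrt (1 - z^2)) / arcsin z, an increasing function of the paced value z.
   A bid t = \<sigma>(y) therefore wins with probability H(y), and \<sigma>(x) H(x) = (2/pi) (1 - sqrt (1 - x^2));
   for the direction cosines x_1, x_2 of w this makes the expected payment of \<beta>^\<mu> exactly the
   budget (2 - x_1 - x_2) / pi. Optimality is weak duality with multiplier \<mu> = norm w - 1 on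
   the budget: per item, (x - \<sigma>(y)) H(y) = (2/pi) (x arcsin y + sqrt (1 - y^2) - 1) is maximal
   at y = x. *)

section \<open>The equilibrium bid function\<close>

definition arcsin_cdf :: "real \<Rightarrow> real" where
  "arcsin_cdf y = 2 / pi * arcsin y"

definition eq_bid :: "real \<Rightarrow> real" where
  "eq_bid z = (if z \<le> 0 then 0 else (1 - sqrt (1 - z\<^sup>2)) / arcsin z)"

lemma x_sin_plus_cos_gt_one:
  assumes "0 < p" "p \<le> pi/2"
  shows "1 < p * sin p + cos p"
proof -
  have "(\<lambda>u. u * sin u + cos u) 0 < (\<lambda>u. u * sin u + cos u) p"
  proof (rule DERIV_pos_imp_increasing_open[OF assms(1)])
    fix x assume x: "0 < x" "x < p"
    have "0 < cos x" using x assms by (intro cos_gt_zero_pi) auto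
    then show "\<exists>y. DERIV (\<lambda>u. u * sin u + cos u) x :> y \<and> 0 < y"
      using x by (intro exI[of _ "x * cos x"] conjI) (auto intro!: derivative_eq_intros)
  qed (intro continuous_intros)
  then show ?thesis by simp
qed

lemma one_minus_cos_div_strict_mono:
  assumes "0 < p" "p < q" "q \<le> pi/2"
  shows "(1 - cos p) / p < (1 - cos q) / q"
proof (rule DERIV_pos_imp_increasing[OF assms(2)])
  fix x assume x: "p \<le> x" "x \<le> q"
  then have "0 < x" using assms by simp
  moreover have "1 < x * sin x + cos x"
    using x assms by (intro x_sin_plus_cos_gt_one) auto
  ultimately show "\<exists>y. DERIV (\<lambda>u. (1 - cos u) / u) x :> y \<and> 0 < y"
    by (intro exI[of _ "(x * sin x + cos x - 1) / x\<^sup>2"] conjI)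
       (auto intro!: derivative_eq_intros simp: field_simps power2_eq_square)
qed

lemma eq_bid_sin:
  assumes "0 < p" "p \<le> pi/2"
  shows "eq_bid (sin p) = (1 - cos p) / p"
proof -
  have "0 < sin p" using assms by (intro sin_gt_zero) auto
  moreover have "sqrt (1 - (sin p)\<^sup>2) = cos p"
    using assms by (simp add: cos_squared_eq[symmetric] cos_ge_zero)
  moreover have "arcsin (sin p) = p" using assms by (intro arcsin_sin) auto
  ultimately show ?thesis by (simp add: eq_bid_def)
qed

lemma eq_bid_pos:
  assumes "0 < z" "z \<le> 1"
  shows "0 < eq_bid z"
proof -
  have "sqrt (1 - z\<^sup>2) < 1" using assms by (simp add: power_less_one_iff)
  moreover have "0 < arcsin z" using assms arcsin_less_mono[of 0 z] by simp
  ultimately show ?thesis using assms by (simp add: eq_bid_def)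
qed

lemma eq_bid_nonneg: "z \<le> 1 \<Longrightarrow> 0 \<le> eq_bid z"
  using eq_bid_pos[of z] by (cases "z \<le> 0") (auto simp: eq_bid_def)

lemma eq_bid_strict_mono:
  assumes "0 \<le> y" "y < z" "z \<le> 1"
  shows "eq_bid y < eq_bid z"
proof (cases "y = 0")
  case True
  then show ?thesis using eq_bid_pos[of z] assms by (simp add: eq_bid_def)
next
  case False
  have "0 < arcsin y" "arcsin y < arcsin z" "arcsin z \<le> pi/2"
    using assms False arcsin_less_mono[of 0 y] arcsin_less_mono[of y z] arcsin_ubound[of z]
    by auto
  with eq_bid_sin[of "arcsin y"] eq_bid_sin[of "arcsin z"]
    one_minus_cos_div_strict_mono[of "arcsin y" "arcsin z"] assms
  show ?thesis by (simp add: cos_arcsin)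
qed

lemma eq_bid_le_iff:
  assumes "0 \<le> y" "y \<le> 1" "z \<le> 1"
  shows "eq_bid z \<le> eq_bid y \<longleftrightarrow> z \<le> y"
proof (cases "z \<le> 0")
  case True
  then show ?thesis using eq_bid_nonneg[of y] assms by (simp add: eq_bid_def)
next
  case False
  then show ?thesis
    using eq_bid_strict_mono[of y z] eq_bid_strict_mono[of z y] assms
    by (cases "y < z"; cases "z < y") auto
qed

lemma eq_bid_le_self:
  assumes "0 < z" "z \<le> 1"
  shows "eq_bid z \<le> z"
proof -
  have "0 \<le> 1 - z\<^sup>2" "1 - z\<^sup>2 \<le> 1" using assms by (auto simp: power_le_one)
  then have "1 - z\<^sup>2 \<le> sqrt (1 - z\<^sup>2)"
    by (intro real_le_rsqrt) (simp add: power2_eq_square mult_left_le)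
  then have num: "1 - sqrt (1 - z\<^sup>2) \<le> z * z" by (simp add: power2_eq_square)
  have "z \<le> arcsin z"
    using sin_x_le_x[of "arcsin z"] assms arcsin_less_mono[of 0 z] by simp
  then have "(1 - sqrt (1 - z\<^sup>2)) / arcsin z \<le> (z * z) / z"
    using num assms by (intro frac_le) (auto simp: real_sqrt_le_1_iff)
  then show ?thesis using assms by (simp add: eq_bid_def)
qed

lemma eq_bid_one: "eq_bid 1 = 2 / pi"
  by (simp add: eq_bid_def)

lemma continuous_on_eq_bid: "0 < e \<Longrightarrow> continuous_on {e..1} eq_bid"
proof -
  assume e: "0 < e"
  have "continuous_on {e..1} (\<lambda>z. (1 - sqrt (1 - z\<^sup>2)) / arcsin z)"
  proof (intro continuous_intros ballI)
    fix x assume "x \<in> {e..1}"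
    then show "-1 \<le> x \<and> x \<le> 1" "arcsin x \<noteq> 0"
      using e arcsin_less_mono[of 0 x] by auto
  qed
  then show ?thesis by (rule continuous_on_eq) (use e in \<open>auto simp: eq_bid_def\<close>)
qed

lemma eq_bid_attains:
  assumes "0 \<le> t" "t < eq_bid 1"
  obtains y where "0 \<le> y" "y \<le> 1" "eq_bid y = t"
proof (cases "t = 0")
  case True
  then show ?thesis using that[of 0] by (simp add: eq_bid_def)
next
  case False
  have "t * 3 \<le> t * pi" using assms pi_gt3 by (intro mult_left_mono) auto
  moreover have "t * pi < 2" using assms by (simp add: eq_bid_one divide_simps)
  ultimately have t: "0 < t" "t < 1" using assms False by linarith+
  then have "eq_bid (t/2) \<le> t/2" by (intro eq_bid_le_self) auto
  then have "\<exists>y. t/2 \<le> y \<and> y \<le> 1 \<and> eq_bid y = t"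
    using assms t by (intro IVT' continuous_on_eq_bid) auto
  then obtain y where "t/2 \<le> y" "y \<le> 1" "eq_bid y = t" by blast
  with t show ?thesis by (intro that[of y]) auto
qed

lemma eq_bid_times_arcsin_cdf:
  assumes "0 \<le> y" "y \<le> 1"
  shows "eq_bid y * arcsin_cdf y = 2 / pi * (1 - sqrt (1 - y\<^sup>2))"
proof (cases "y = 0")
  case False
  then have "0 < arcsin y" using assms arcsin_less_mono[of 0 y] by simp
  then show ?thesis using False assms by (simp add: eq_bid_def arcsin_cdf_def)
qed (simp add: eq_bid_def arcsin_cdf_def)

lemma set_integral_arcsin:
  assumes "0 \<le> z" "z \<le> 1"
  shows "(LBINT s:{0..z}. arcsin s) = z * arcsin z + sqrt (1 - z\<^sup>2) - 1"
proof -
  define F where "F s = s * arcsin s + sqrt (1 - s\<^sup>2)" for s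
  have "(arcsin has_integral (F z - F 0)) {0..z}"
  proof (rule fundamental_theorem_of_calculus_interior)
    show "continuous_on {0..z} F"
      unfolding F_def using assms by (intro continuous_intros) auto
    fix s assume "s \<in> {0<..<z}"
    then have s: "-1 < s" "s < 1" "0 < 1 - s\<^sup>2"
      using assms by (auto simp: abs_square_less_1)
    have "DERIV F s :> arcsin s"
      unfolding F_def
      by (rule DERIV_cong, (rule DERIV_arcsin[OF s(1,2)] derivative_eq_intros refl | use s in simp)+)
    then show "(F has_vector_derivative arcsin s) (at s)"
      by (simp add: has_real_derivative_iff_has_vector_derivative[symmetric])
  qed (use assms in simp)
  moreover have "set_integrable lborel {0..z} arcsin"
    unfolding set_integrable_def using assms
    by (intro borel_integrable_compact compact_Icc continuous_intros) auto
  ultimately show ?thesis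
    by (simp add: set_borel_integral_eq_integral(2) integral_unique F_def)
qed

text \<open>In terms of q = arcsin y the left-hand side is sin p * q + cos q with p = arcsin x,
  whose derivative sin p - sin q changes sign at q = p.\<close>
lemma x_arcsin_plus_sqrt_le:
  assumes "0 \<le> x" "x \<le> 1" "0 \<le> y" "y \<le> 1"
  shows "x * arcsin y + sqrt (1 - y\<^sup>2) \<le> x * arcsin x + sqrt (1 - x\<^sup>2)"
proof -
  define p q where "p = arcsin x" and "q = arcsin y"
  have p: "0 \<le> p" "p \<le> pi/2" and q: "0 \<le> q" "q \<le> pi/2"
    using assms arcsin_le_mono[of 0 x] arcsin_le_mono[of 0 y] arcsin_ubound[of x]
      arcsin_ubound[of y] by (auto simp: p_def q_def)
  have D: "DERIV (\<lambda>u. sin p * u + cos u) u :> sin p - sin u" for u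
    by (auto intro!: derivative_eq_intros)
  have "sin p * q + cos q \<le> sin p * p + cos p"
  proof (cases "q \<le> p")
    case True
    show ?thesis
    proof (rule DERIV_nonneg_imp_nondecreasing[OF True, of "\<lambda>u. sin p * u + cos u", simplified])
      fix u assume "q \<le> u" "u \<le> p"
      then show "\<exists>y. DERIV (\<lambda>u. sin p * u + cos u) u :> y \<and> 0 \<le> y"
        using D p q by (intro exI[of _ "sin p - sin u"] conjI) (auto intro!: sin_monotone_2pi_le)
    qed
  next
    case False
    show ?thesis
    proof (rule DERIV_nonpos_imp_nonincreasing[of p q "\<lambda>u. sin p * u + cos u", simplified])
      fix u assume "p \<le> u" "u \<le> q"
      then show "\<exists>y. DERIV (\<lambda>u. sin p * u + cos u) u :> y \<and> y \<le> 0"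
        using D p q by (intro exI[of _ "sin p - sin u"] conjI) (auto intro!: sin_monotone_2pi_le)
    qed (use False in simp)
  qed
  then show ?thesis using assms by (simp add: p_def q_def cos_arcsin)
qed

text \<open>Weak duality for one item, with multiplier \<rho> - 1 on the payment.\<close>
lemma item_lagrangian_le:
  assumes x: "0 \<le> x" "x \<le> 1" and y: "0 \<le> y" "y \<le> 1" and t: "eq_bid y \<le> t"
    and \<rho>: "1 \<le> \<rho>"
  shows "(\<rho> * x - t) * arcsin_cdf y
           \<le> \<rho> * ((x - eq_bid x) * arcsin_cdf x) + (\<rho> - 1) * (t * arcsin_cdf y)"
proof -
  have surplus: "(x - eq_bid z) * arcsin_cdf z = 2 / pi * (x * arcsin z + sqrt (1 - z\<^sup>2) - 1)"
    if "0 \<le> z" "z \<le> 1" for z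
  proof -
    have "(x - eq_bid z) * arcsin_cdf z = x * arcsin_cdf z - eq_bid z * arcsin_cdf z"
      by (simp add: algebra_simps)
    then show ?thesis
      unfolding eq_bid_times_arcsin_cdf[OF that] by (simp add: arcsin_cdf_def algebra_simps)
  qed
  have "(x - t) * arcsin_cdf y \<le> (x - eq_bid y) * arcsin_cdf y"
    using t y arcsin_le_mono[of 0 y] by (intro mult_right_mono) (auto simp: arcsin_cdf_def)
  also have "\<dots> \<le> (x - eq_bid x) * arcsin_cdf x"
    unfolding surplus[OF y] surplus[OF x]
    using x_arcsin_plus_sqrt_le[OF x y] by (intro mult_left_mono) auto
  finally have "(x - t) * arcsin_cdf y \<le> (x - eq_bid x) * arcsin_cdf x" .
  then have "\<rho> * ((x - t) * arcsin_cdf y) \<le> \<rho> * ((x - eq_bid x) * arcsin_cdf x)"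
    using \<rho> by (intro mult_left_mono) auto
  then show ?thesis by (simp add: algebra_simps)
qed

lemma two_item_lagrangian_le:
  assumes x: "0 \<le> x1" "x1 \<le> 1" "0 \<le> x2" "x2 \<le> 1"
    and y: "0 \<le> y1" "y1 \<le> 1" "0 \<le> y2" "y2 \<le> 1"
    and t: "eq_bid y1 \<le> t1" "eq_bid y2 \<le> t2" and \<rho>: "1 \<le> \<rho>"
    and pay: "t1 * arcsin_cdf y1 + t2 * arcsin_cdf y2
                \<le> eq_bid x1 * arcsin_cdf x1 + eq_bid x2 * arcsin_cdf x2"
  shows "(\<rho> * x1 - t1) * arcsin_cdf y1 + (\<rho> * x2 - t2) * arcsin_cdf y2
           \<le> (\<rho> * x1 - eq_bid x1) * arcsin_cdf x1 + (\<rho> * x2 - eq_bid x2) * arcsin_cdf x2"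
proof -
  have "(\<rho> - 1) * (t1 * arcsin_cdf y1 + t2 * arcsin_cdf y2)
      \<le> (\<rho> - 1) * (eq_bid x1 * arcsin_cdf x1 + eq_bid x2 * arcsin_cdf x2)"
    using pay \<rho> by (intro mult_left_mono) auto
  then show ?thesis
    using item_lagrangian_le[OF x(1,2) y(1,2) t(1) \<rho>] item_lagrangian_le[OF x(3,4) y(3,4) t(2) \<rho>]
    by (simp add: algebra_simps)
qed

section \<open>Sectors of the quarter annulus\<close>

lemma fst_borel_measurable [measurable]: "fst \<in> borel_measurable (borel :: (real \<times> real) measure)"
  by (intro borel_measurable_continuous_onI continuous_intros)

lemma snd_borel_measurable [measurable]: "snd \<in> borel_measurable (borel :: (real \<times> real) measure)"
  by (intro borel_measurable_continuous_onI continuous_intros)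

lemma norm_Pair_real: "norm (s :: real, t :: real) = sqrt (s\<^sup>2 + t\<^sup>2)"
  by (simp add: norm_Pair)

lemma le_sqrt_iff_square_le: "0 \<le> a \<Longrightarrow> a \<le> sqrt x \<longleftrightarrow> a\<^sup>2 \<le> x"
  using real_sqrt_le_iff[of "a\<^sup>2" x] by simp

lemma sqrt_le_iff_le_square: "0 \<le> b \<Longrightarrow> sqrt x \<le> b \<longleftrightarrow> x \<le> b\<^sup>2"
  using real_sqrt_le_iff[of x "b\<^sup>2"] by simp

definition quadrant_sector :: "real \<Rightarrow> real \<Rightarrow> (real \<times> real) set" where
  "quadrant_sector r y = {w. 0 \<le> fst w \<and> 0 \<le> snd w \<and> norm w \<le> r \<and> fst w \<le> y * norm w}"

lemma quadrant_sector_sets [measurable]: "quadrant_sector r y \<in> sets borel"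
  unfolding quadrant_sector_def by measurable

lemma quadrant_sector_slice_bounds:
  assumes y: "0 < y" "y \<le> 1" and s: "0 \<le> s" "s \<le> r * y"
  shows "s * sqrt (1 - y\<^sup>2) / y \<le> sqrt (r\<^sup>2 - s\<^sup>2)"
proof -
  have y2: "y\<^sup>2 \<le> 1" using y by (simp add: power_le_one)
  have "s / y \<le> r" using s y by (simp add: divide_simps mult.commute)
  then have "(s / y)\<^sup>2 \<le> r\<^sup>2" using s y by (intro power_mono) auto
  then have *: "s\<^sup>2 / y\<^sup>2 \<le> r\<^sup>2" by (simp add: power_divide)
  have "(s * sqrt (1 - y\<^sup>2) / y)\<^sup>2 = s\<^sup>2 / y\<^sup>2 - s\<^sup>2"
    using y y2 by (simp add: power_divide power_mult_distrib field_simps)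
  also have "\<dots> \<le> r\<^sup>2 - s\<^sup>2" using * by simp
  finally show ?thesis by (intro real_le_rsqrt)
qed

lemma quadrant_sector_slice:
  assumes r: "0 < r" and y: "0 < y" "y \<le> 1" and s: "0 \<le> s" "s \<le> r * y"
  shows "Pair s -` quadrant_sector r y = {s * sqrt (1 - y\<^sup>2) / y .. sqrt (r\<^sup>2 - s\<^sup>2)}"
proof (intro set_eqI)
  fix t
  have y2: "y\<^sup>2 \<le> 1" using y by (simp add: power_le_one)
  have k0: "0 \<le> s * sqrt (1 - y\<^sup>2) / y" using s y y2 by simp
  have L: "t \<in> Pair s -` quadrant_sector r y \<longleftrightarrow>
      0 \<le> t \<and> sqrt (s\<^sup>2 + t\<^sup>2) \<le> r \<and> s \<le> y * sqrt (s\<^sup>2 + t\<^sup>2)"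
    using s by (simp add: quadrant_sector_def norm_Pair_real)
  show "t \<in> Pair s -` quadrant_sector r y \<longleftrightarrow> t \<in> {s * sqrt (1 - y\<^sup>2) / y .. sqrt (r\<^sup>2 - s\<^sup>2)}"
  proof (cases "0 \<le> t")
    case False
    then show ?thesis using L k0 by auto
  next
    case t: True
    have P1: "sqrt (s\<^sup>2 + t\<^sup>2) \<le> r \<longleftrightarrow> t \<le> sqrt (r\<^sup>2 - s\<^sup>2)"
      using r t by (simp add: sqrt_le_iff_le_square le_sqrt_iff_square_le algebra_simps)
    have "y * sqrt (s\<^sup>2 + t\<^sup>2) = sqrt (y\<^sup>2 * (s\<^sup>2 + t\<^sup>2))"
      using y by (simp add: real_sqrt_mult)
    then have P2: "s \<le> y * sqrt (s\<^sup>2 + t\<^sup>2) \<longleftrightarrow> s\<^sup>2 \<le> y\<^sup>2 * (s\<^sup>2 + t\<^sup>2)"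
      using s by (simp add: le_sqrt_iff_square_le)
    have "s * sqrt (1 - y\<^sup>2) / y \<le> t \<longleftrightarrow> (s * sqrt (1 - y\<^sup>2) / y)\<^sup>2 \<le> t\<^sup>2"
      using k0 t by (meson power_mono power2_le_imp_le)
    also have "(s * sqrt (1 - y\<^sup>2) / y)\<^sup>2 = s\<^sup>2 * (1 - y\<^sup>2) / y\<^sup>2"
      using y2 by (simp add: power_divide power_mult_distrib)
    also have "s\<^sup>2 * (1 - y\<^sup>2) / y\<^sup>2 \<le> t\<^sup>2 \<longleftrightarrow> s\<^sup>2 \<le> y\<^sup>2 * (s\<^sup>2 + t\<^sup>2)"
      using y by (simp add: divide_le_eq algebra_simps)
    finally have P3: "s * sqrt (1 - y\<^sup>2) / y \<le> t \<longleftrightarrow> s\<^sup>2 \<le> y\<^sup>2 * (s\<^sup>2 + t\<^sup>2)" .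
    show ?thesis using L P1 P2 P3 t by auto
  qed
qed

lemma quadrant_sector_slice_empty:
  assumes "0 \<le> y" "s < 0 \<or> r * y < s"
  shows "Pair s -` quadrant_sector r y = {}"
proof -
  have False if "(s, t) \<in> quadrant_sector r y" for t
  proof -
    from that have "0 \<le> s" "norm (s, t) \<le> r" "s \<le> y * norm (s, t)"
      by (auto simp: quadrant_sector_def)
    moreover from this have "y * norm (s, t) \<le> y * r" using assms by (intro mult_left_mono)
    ultimately show False using assms by (auto simp: mult.commute)
  qed
  then show ?thesis by auto
qed

lemma DERIV_sqrt_square_diff:
  assumes "0 \<le> s" "s < r"
  shows "DERIV (\<lambda>s. sqrt (r\<^sup>2 - s\<^sup>2)) s :> - s / sqrt (r\<^sup>2 - s\<^sup>2)"
proof -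
  have "0 < r\<^sup>2 - s\<^sup>2" using assms by (simp add: power_strict_mono)
  then show ?thesis by (auto intro!: derivative_eq_intros simp: field_simps)
qed

lemma DERIV_arcsin_divide:
  assumes "0 \<le> s" "s < r"
  shows "DERIV (\<lambda>s. arcsin (s / r)) s :> 1 / sqrt (r\<^sup>2 - s\<^sup>2)"
proof -
  have r: "0 < r" and p: "0 < r\<^sup>2 - s\<^sup>2" using assms by (auto simp: power_strict_mono)
  have sr: "- 1 < s / r" "s / r < 1" using assms by (auto simp: divide_simps)
  have "sqrt (1 - (s / r)\<^sup>2) = sqrt ((r\<^sup>2 - s\<^sup>2) / r\<^sup>2)"
    using r by (simp add: field_simps power_divide)
  also have "\<dots> = sqrt (r\<^sup>2 - s\<^sup>2) / r"
    using r by (simp add: real_sqrt_divide)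
  finally have e: "sqrt (1 - (s / r)\<^sup>2) = sqrt (r\<^sup>2 - s\<^sup>2) / r" .
  have "DERIV (\<lambda>s. arcsin (s / r)) s :> inverse (sqrt (1 - (s / r)\<^sup>2)) * (1 / r)"
    using DERIV_chain2[OF DERIV_arcsin[OF sr] DERIV_cdivide[OF DERIV_ident, of r]] by simp
  also have "inverse (sqrt (1 - (s / r)\<^sup>2)) * (1 / r) = 1 / sqrt (r\<^sup>2 - s\<^sup>2)"
    using r p by (simp add: e inverse_eq_divide)
  finally show ?thesis .
qed

lemma quadrant_sector_slice_length_has_integral:
  assumes r: "0 < r" and y: "0 < y" "y \<le> 1"
  shows "((\<lambda>s. sqrt (r\<^sup>2 - s\<^sup>2) - s * sqrt (1 - y\<^sup>2) / y) has_integral (r\<^sup>2 * arcsin y / 2))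
           {0 .. r * y}"
proof -
  define k where "k = sqrt (1 - y\<^sup>2) / y"
  define F where "F s = (s * sqrt (r\<^sup>2 - s\<^sup>2) + r\<^sup>2 * arcsin (s / r)) / 2 - k * s\<^sup>2 / 2" for s
  have ry: "r * y \<le> r" using mult_left_le[of y r] r y by simp
  have "((\<lambda>s. sqrt (r\<^sup>2 - s\<^sup>2) - s * k) has_integral (F (r * y) - F 0)) {0 .. r * y}"
  proof (rule fundamental_theorem_of_calculus_interior)
    show "0 \<le> r * y" using r y by simp
    have "- 1 \<le> x / r \<and> x / r \<le> 1" if "x \<in> {0..r * y}" for x
    proof -
      from that have "0 \<le> x" "x \<le> r" using ry by auto
      with r show ?thesis by (auto simp: divide_simps)
    qed
    then show "continuous_on {0..r * y} F" unfolding F_def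
      using r by (intro continuous_intros) auto
    fix s assume s: "s \<in> {0<..<r * y}"
    then have s0: "0 \<le> s" "s < r" using ry by auto
    have S: "0 < sqrt (r\<^sup>2 - s\<^sup>2)" "(sqrt (r\<^sup>2 - s\<^sup>2))\<^sup>2 = r\<^sup>2 - s\<^sup>2"
      using s0 by (auto simp: power_strict_mono)
    have "DERIV F s :> sqrt (r\<^sup>2 - s\<^sup>2) - s * k"
      unfolding F_def
      by (rule DERIV_cong,
          (rule DERIV_sqrt_square_diff[OF s0] DERIV_arcsin_divide[OF s0] derivative_eq_intros refl
            | simp)+)
         (use S in \<open>simp add: field_simps power2_eq_square\<close>)
    then show "(F has_vector_derivative sqrt (r\<^sup>2 - s\<^sup>2) - s * k) (at s)"
      by (simp add: has_real_derivative_iff_has_vector_derivative[symmetric])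
  qed
  moreover have "F (r * y) - F 0 = r\<^sup>2 * arcsin y / 2"
  proof -
    have "r\<^sup>2 - (r * y)\<^sup>2 = r\<^sup>2 * (1 - y\<^sup>2)" by (simp add: algebra_simps power_mult_distrib)
    then have "sqrt (r\<^sup>2 - (r * y)\<^sup>2) = r * sqrt (1 - y\<^sup>2)" using r by (simp add: real_sqrt_mult)
    moreover have "k * (r * y)\<^sup>2 = r * y * (r * sqrt (1 - y\<^sup>2))"
      using y by (simp add: k_def power2_eq_square)
    ultimately show ?thesis using r by (simp add: F_def add_divide_distrib)
  qed
  ultimately show ?thesis by (simp add: k_def)
qed

lemma emeasure_quadrant_sector:
  assumes r: "0 < r" and y: "0 \<le> y" "y \<le> 1"
  shows "emeasure lborel (quadrant_sector r y) = ennreal (r\<^sup>2 * arcsin y / 2)"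
proof (cases "y = 0")
  case True
  have "quadrant_sector r 0 \<subseteq> {0} \<times> UNIV" by (auto simp: quadrant_sector_def)
  moreover have "{0 :: real} \<times> UNIV \<in> sets (borel :: (real \<times> real) measure)"
    by (intro borel_closed closed_Times) auto
  ultimately have "emeasure lborel (quadrant_sector r 0) \<le> emeasure (lborel \<Otimes>\<^sub>M lborel) ({0::real} \<times> (UNIV :: real set))"
    by (subst lborel_prod) (intro emeasure_mono, auto)
  also have "\<dots> = 0"
    by (subst lborel.emeasure_pair_measure_Times) auto
  finally show ?thesis using True by simp
next
  case False
  then have y0: "0 < y" using y by simp
  define f where "f s = sqrt (r\<^sup>2 - s\<^sup>2) - s * sqrt (1 - y\<^sup>2) / y" for s
  have "emeasure (lborel \<Otimes>\<^sub>M lborel) (quadrant_sector r y)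
      = (\<integral>\<^sup>+s. emeasure lborel (Pair s -` quadrant_sector r y) \<partial>lborel)"
    by (rule lborel.emeasure_pair_measure_alt) (simp only: lborel_prod sets_lborel quadrant_sector_sets)
  also have "\<dots> = (\<integral>\<^sup>+s. ennreal (f s) * indicator {0..r*y} s \<partial>lborel)"
  proof (intro nn_integral_cong)
    fix s :: real
    show "emeasure lborel (Pair s -` quadrant_sector r y) = ennreal (f s) * indicator {0..r*y} s"
    proof (cases "0 \<le> s \<and> s \<le> r * y")
      case True
      then show ?thesis
        using quadrant_sector_slice[OF r y0 y(2)] quadrant_sector_slice_bounds[OF y0 y(2)]
        by (simp add: f_def)
    qed (use quadrant_sector_slice_empty[OF y(1)] in auto)
  qed
  also have "\<dots> = ennreal (r\<^sup>2 * arcsin y / 2)"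
  proof (rule nn_integral_has_integral_lebesgue')
    show "\<And>x. x \<in> {0..r * y} \<Longrightarrow> 0 \<le> f x"
      using quadrant_sector_slice_bounds[OF y0 y(2)] by (simp add: f_def)
    show "(f has_integral r\<^sup>2 * arcsin y / 2) {0..r * y}"
      unfolding f_def by (rule quadrant_sector_slice_length_has_integral[OF r y0 y(2)])
  qed
  finally show ?thesis by (simp add: lborel_prod)
qed

lemma emeasure_lborel_swap:
  assumes "S \<in> sets (borel :: (real \<times> real) measure)"
  shows "emeasure lborel S = emeasure lborel ((\<lambda>(x, y). (y, x)) -` S)"
proof -
  have "lborel \<Otimes>\<^sub>M lborel
      = distr (lborel \<Otimes>\<^sub>M lborel) (lborel \<Otimes>\<^sub>M (lborel :: real measure)) (\<lambda>(x, y). (y, x))"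
    by (rule lborel_pair.distr_pair_swap)
  then have L: "(lborel :: (real \<times> real) measure) = distr lborel lborel (\<lambda>(x, y). (y, x))"
    by (simp only: lborel_prod)
  have "(\<lambda>(x, y). (y, x)) = (\<lambda>w :: real \<times> real. (snd w, fst w))" by auto
  then have m: "(\<lambda>(x, y). (y, x)) \<in> measurable (lborel :: (real \<times> real) measure) lborel"
    unfolding measurable_lborel2 measurable_lborel1
    by (simp only:) (intro borel_measurable_continuous_onI continuous_intros)
  have "emeasure lborel S = emeasure (distr lborel lborel (\<lambda>(x, y). (y, x))) S"
    using L by metis
  also have "\<dots> = emeasure lborel ((\<lambda>(x, y). (y, x)) -` S \<inter> space lborel)"
    using assms m by (intro emeasure_distr) auto
  finally show ?thesis by simp
qed

lemma W_ex_sets [measurable]: "W_ex a b \<in> sets borel"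
  unfolding W_ex_def by measurable

text \<open>Up to the null circle of radius a, this set is the difference of two sectors.\<close>
lemma emeasure_W_ex_fst_le:
  assumes a: "0 < a" "a < b" and y: "0 \<le> y" "y \<le> 1"
  shows "emeasure lborel {w \<in> W_ex a b. fst w \<le> y * norm w} = ennreal ((b\<^sup>2 - a\<^sup>2) * arcsin y / 2)"
proof -
  have "sphere 0 a \<in> null_sets (lborel :: (real \<times> real) measure)"
    using negligible_sphere[of 0 a]
    by (auto simp: null_sets_completion_iff negligible_iff_null_sets)
  then have "AE w in lborel. w \<in> {w \<in> W_ex a b. fst w \<le> y * norm w}
      \<longleftrightarrow> w \<in> quadrant_sector b y - quadrant_sector a y"
    by (rule AE_I'[OF _ subsetI]) (auto simp: W_ex_def quadrant_sector_def)
  then have "emeasure lborel {w \<in> W_ex a b. fst w \<le> y * norm w}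
      = emeasure lborel (quadrant_sector b y - quadrant_sector a y)"
    by (rule emeasure_eq_AE) (auto simp: W_ex_def)
  also have "\<dots> = emeasure lborel (quadrant_sector b y) - emeasure lborel (quadrant_sector a y)"
    using emeasure_quadrant_sector[OF a(1) y] a
    by (intro emeasure_Diff) (auto simp: quadrant_sector_def)
  also have "\<dots> = ennreal (b\<^sup>2 * arcsin y / 2) - ennreal (a\<^sup>2 * arcsin y / 2)"
    using emeasure_quadrant_sector[OF a(1) y] emeasure_quadrant_sector[of b y] a y by simp
  also have "\<dots> = ennreal ((b\<^sup>2 - a\<^sup>2) * arcsin y / 2)"
    using arcsin_le_mono[of 0 y] y by (subst ennreal_minus) (auto simp: field_simps)
  finally show ?thesis .
qed

lemma emeasure_W_ex_snd_le:
  assumes a: "0 < a" "a < b" and y: "0 \<le> y" "y \<le> 1"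
  shows "emeasure lborel {w \<in> W_ex a b. snd w \<le> y * norm w} = ennreal ((b\<^sup>2 - a\<^sup>2) * arcsin y / 2)"
proof -
  have "{w \<in> W_ex a b. snd w \<le> y * norm w} \<in> sets (borel :: (real \<times> real) measure)"
    unfolding W_ex_def by measurable
  then have "emeasure lborel {w \<in> W_ex a b. snd w \<le> y * norm w}
      = emeasure lborel ((\<lambda>(x, y). (y, x)) -` {w \<in> W_ex a b. snd w \<le> y * norm w})"
    by (rule emeasure_lborel_swap)
  also have "(\<lambda>(x, y). (y, x)) -` {w \<in> W_ex a b. snd w \<le> y * norm w}
      = {w \<in> W_ex a b. fst w \<le> y * norm w}"
    by (auto simp: W_ex_def norm_Pair_real add.commute)
  finally show ?thesis using emeasure_W_ex_fst_le[OF a y] by simp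
qed

lemma inner_e1: "w \<bullet> e1 = fst w"
  by (simp add: inner_prod_def e1_def)

lemma inner_e2: "w \<bullet> e2 = snd w"
  by (simp add: inner_prod_def e2_def)

lemma emeasure_W_ex_inner_le:
  assumes "0 < a" "a < b" "0 \<le> y" "y \<le> 1" "\<alpha> \<in> {e1, e2}"
  shows "emeasure lborel {w \<in> W_ex a b. w \<bullet> \<alpha> \<le> y * norm w} = ennreal ((b\<^sup>2 - a\<^sup>2) * arcsin y / 2)"
  using assms emeasure_W_ex_fst_le emeasure_W_ex_snd_le by (auto simp: inner_e1 inner_e2)

lemma emeasure_W_ex:
  assumes "0 < a" "a < b"
  shows "emeasure lborel (W_ex a b) = ennreal ((b\<^sup>2 - a\<^sup>2) * pi / 4)"
proof -
  have "W_ex a b = {w \<in> W_ex a b. fst w \<le> 1 * norm w}"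
    by (auto simp: W_ex_def norm_Pair_real intro: order_trans[OF _ real_sqrt_ge_abs1])
  then show ?thesis using emeasure_W_ex_fst_le[OF assms, of 1] by simp
qed

lemma measure_W_ex:
  assumes "0 < a" "a < b"
  shows "measure lborel (W_ex a b) = (b\<^sup>2 - a\<^sup>2) * pi / 4"
  using emeasure_W_ex[OF assms] assms by (simp add: measure_def power_strict_mono)

lemma prob_space_G_ex:
  assumes "0 < a" "a < b"
  shows "prob_space (G_ex a b)"
proof -
  have "prob_space (uniform_measure lborel (W_ex a b))"
    using emeasure_W_ex[OF assms] assms
    by (intro prob_space_uniform_measure) (auto simp: power_strict_mono)
  then show ?thesis unfolding G_ex_def
    by (rule prob_space.prob_space_distr) (simp add: budget_ex_def)
qed

section \<open>The law of the paced values\<close>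

definition paced_val :: "item \<Rightarrow> btype \<Rightarrow> real" where
  "paced_val \<alpha> \<theta> = (fst \<theta> \<bullet> \<alpha>) / norm (fst \<theta>)"

lemma val_div_one_plus_mu_ex: "val \<theta> \<alpha> / (1 + mu_ex \<theta>) = paced_val \<alpha> \<theta>"
  by (simp add: val_def mu_ex_def paced_val_def)

lemma paced_val_le_one:
  assumes "norm \<alpha> \<le> 1"
  shows "paced_val \<alpha> \<theta> \<le> 1"
proof -
  have "fst \<theta> \<bullet> \<alpha> \<le> norm (fst \<theta>)"
    using norm_cauchy_schwarz[of "fst \<theta>" \<alpha>] mult_left_le[OF assms, of "norm (fst \<theta>)"] by simp
  then show ?thesis
    by (cases "norm (fst \<theta>) = 0") (auto simp: paced_val_def divide_le_eq_1)
qed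

lemma norm_e1_e2: "\<alpha> \<in> {e1, e2} \<Longrightarrow> norm \<alpha> = 1"
  by (auto simp: e1_def e2_def norm_Pair)

lemma fst_btype_measurable [measurable]:
  "fst \<in> measurable (borel :: btype measure) (borel :: (real \<times> real) measure)"
  by (intro borel_measurable_continuous_onI continuous_intros)

lemma budget_ex_measurable [measurable]: "budget_ex \<in> borel_measurable borel"
  unfolding budget_ex_def by measurable

lemma snd_btype_measurable [measurable]: "snd \<in> borel_measurable (borel :: btype measure)"
  by (intro borel_measurable_continuous_onI continuous_intros)

lemma paced_val_measurable [measurable]: "paced_val \<alpha> \<in> borel_measurable borel"
proof -
  have "(\<lambda>w :: real \<times> real. (w \<bullet> \<alpha>) / norm w) \<in> borel_measurable borel" by measurable
  then show ?thesis unfolding paced_val_def by (rule measurable_compose[OF fst_btype_measurable])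
qed

lemma measure_G_ex_fst_vimage:
  assumes a: "0 < a" "a < b" and S: "S \<in> sets borel"
  shows "measure (G_ex a b) {\<theta>. fst \<theta> \<in> S} = measure lborel (W_ex a b \<inter> S) / ((b\<^sup>2 - a\<^sup>2) * pi / 4)"
proof -
  let ?U = "uniform_measure lborel (W_ex a b)"
  have "measure (G_ex a b) {\<theta>. fst \<theta> \<in> S}
      = measure ?U ((\<lambda>w. (w, budget_ex w)) -` {\<theta>. fst \<theta> \<in> S} \<inter> space ?U)"
    unfolding G_ex_def using S by (intro measure_distr) (auto simp: budget_ex_def)
  also have "\<dots> = measure ?U S" by (simp add: vimage_def)
  also have "\<dots> = measure lborel (W_ex a b \<inter> S) / measure lborel (W_ex a b)"
    using emeasure_W_ex[OF a] a S
    by (intro measure_uniform_measure) (auto simp: power_strict_mono)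
  finally show ?thesis using measure_W_ex[OF a] by simp
qed

lemma measure_G_ex_paced_val_le:
  assumes a: "0 < a" "a < b" and \<alpha>: "\<alpha> \<in> {e1, e2}" and y: "y \<le> 1"
  shows "measure (G_ex a b) {\<theta>. paced_val \<alpha> \<theta> \<le> y} = (if y < 0 then 0 else arcsin_cdf y)"
proof -
  have pos: "0 < norm w" if "w \<in> W_ex a b" for w
    using that a by (auto simp: W_ex_def)
  have "measure (G_ex a b) {\<theta>. paced_val \<alpha> \<theta> \<le> y}
      = measure (G_ex a b) {\<theta>. fst \<theta> \<in> {w. (w \<bullet> \<alpha>) / norm w \<le> y}}"
    by (simp add: paced_val_def)
  also have "\<dots> = measure lborel (W_ex a b \<inter> {w. (w \<bullet> \<alpha>) / norm w \<le> y}) / ((b\<^sup>2 - a\<^sup>2) * pi / 4)"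
    by (rule measure_G_ex_fst_vimage[OF a]) measurable
  also have "W_ex a b \<inter> {w. (w \<bullet> \<alpha>) / norm w \<le> y} = {w \<in> W_ex a b. w \<bullet> \<alpha> \<le> y * norm w}"
    using pos by (auto simp: pos_divide_le_eq mult.commute)
  finally have eq: "measure (G_ex a b) {\<theta>. paced_val \<alpha> \<theta> \<le> y}
      = measure lborel {w \<in> W_ex a b. w \<bullet> \<alpha> \<le> y * norm w} / ((b\<^sup>2 - a\<^sup>2) * pi / 4)" .
  show ?thesis
  proof (cases "y < 0")
    case True
    have "w \<bullet> \<alpha> \<ge> 0" "y * norm w < 0" if "w \<in> W_ex a b" for w
      using that pos[OF that] \<alpha> True by (auto simp: W_ex_def inner_e1 inner_e2 mult_neg_pos)
    then have "{w \<in> W_ex a b. w \<bullet> \<alpha> \<le> y * norm w} = {}" by force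
    then have "measure lborel {w \<in> W_ex a b. w \<bullet> \<alpha> \<le> y * norm w} = 0"
      by (simp only: measure_empty)
    then show ?thesis using eq True by simp
  next
    case False
    have "measure lborel {w \<in> W_ex a b. w \<bullet> \<alpha> \<le> y * norm w} = (b\<^sup>2 - a\<^sup>2) * arcsin y / 2"
      using emeasure_W_ex_inner_le[OF a _ y \<alpha>] False a arcsin_le_mono[of 0 y] y
      by (simp add: measure_def power_strict_mono)
    then have "measure (G_ex a b) {\<theta>. paced_val \<alpha> \<theta> \<le> y}
        = ((b\<^sup>2 - a\<^sup>2) * arcsin y / 2) / ((b\<^sup>2 - a\<^sup>2) * pi / 4)"
      using eq by (simp only:)
    also have "\<dots> = arcsin_cdf y"
      using a by (simp add: arcsin_cdf_def power_strict_mono)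
    finally show ?thesis using False by simp
  qed
qed

lemma Hdist_G_ex:
  assumes "0 < a" "a < b" "\<alpha> \<in> {e1, e2}" "y \<le> 1"
  shows "Hdist 2 (G_ex a b) mu_ex \<alpha> y = (if y < 0 then 0 else arcsin_cdf y)"
proof -
  have "measure (paced_dist (G_ex a b) mu_ex \<alpha>) {..y}
      = measure (G_ex a b) (paced_val \<alpha> -` {..y} \<inter> space (G_ex a b))"
    unfolding paced_dist_def val_div_one_plus_mu_ex
    by (intro measure_distr) (auto simp: G_ex_def)
  also have "paced_val \<alpha> -` {..y} \<inter> space (G_ex a b) = {\<theta>. paced_val \<alpha> \<theta> \<le> y}"
    by (auto simp: G_ex_def)
  finally show ?thesis using measure_G_ex_paced_val_le[OF assms] by (simp add: Hdist_def)
qed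

lemma sigma_bid_G_ex:
  assumes a: "0 < a" "a < b" and \<alpha>: "\<alpha> \<in> {e1, e2}" and z: "z \<le> 1"
  shows "sigma_bid 2 (G_ex a b) mu_ex \<alpha> z = eq_bid z"
proof (cases "z \<le> 0")
  case True
  then show ?thesis
    using Hdist_G_ex[OF a \<alpha> z] by (auto simp: sigma_bid_def eq_bid_def arcsin_cdf_def)
next
  case False
  have az: "0 < arcsin z" using False z arcsin_less_mono[of 0 z] by simp
  have Hz: "Hdist 2 (G_ex a b) mu_ex \<alpha> z = arcsin_cdf z"
    using Hdist_G_ex[OF a \<alpha> z] False by simp
  have "(LBINT s:{0..z}. Hdist 2 (G_ex a b) mu_ex \<alpha> s / Hdist 2 (G_ex a b) mu_ex \<alpha> z)
      = (LBINT s:{0..z}. arcsin s / arcsin z)"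
    using Hdist_G_ex[OF a \<alpha>] z False
    by (intro set_lebesgue_integral_cong) (auto simp: arcsin_cdf_def)
  also have "\<dots> = (z * arcsin z + sqrt (1 - z\<^sup>2) - 1) / arcsin z"
    using set_integral_arcsin[of z] False z by simp
  finally have I: "(LBINT s:{0..z}. Hdist 2 (G_ex a b) mu_ex \<alpha> s / Hdist 2 (G_ex a b) mu_ex \<alpha> z)
      = (z * arcsin z + sqrt (1 - z\<^sup>2) - 1) / arcsin z" .
  have "z - (z * arcsin z + sqrt (1 - z\<^sup>2) - 1) / arcsin z = eq_bid z"
    using False az by (simp add: eq_bid_def field_simps)
  with Hz I az show ?thesis by (simp add: sigma_bid_def arcsin_cdf_def)
qed

lemma beta_pacing_G_ex:
  assumes "0 < a" "a < b" "\<alpha> \<in> {e1, e2}"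
  shows "beta_pacing 2 (G_ex a b) mu_ex \<theta> \<alpha> = eq_bid (paced_val \<alpha> \<theta>)"
  using sigma_bid_G_ex[OF assms] paced_val_le_one[of \<alpha> \<theta>] norm_e1_e2[OF assms(3)]
  by (simp add: beta_pacing_def val_div_one_plus_mu_ex)

section \<open>Payments, utilities and the equilibrium\<close>

abbreviation beta_ex :: "real \<Rightarrow> real \<Rightarrow> btype \<Rightarrow> item \<Rightarrow> real" where
  "beta_ex a b \<equiv> beta_pacing 2 (G_ex a b) mu_ex"

abbreviation payment_ex :: "real \<Rightarrow> real \<Rightarrow> (item \<Rightarrow> real) \<Rightarrow> real" where
  "payment_ex a b \<equiv> exp_payment 2 (G_ex a b) F_ex (\<lambda>_. 0) (beta_ex a b)"

abbreviation utility_ex :: "real \<Rightarrow> real \<Rightarrow> btype \<Rightarrow> (item \<Rightarrow> real) \<Rightarrow> real" where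
  "utility_ex a b \<equiv> exp_utility 2 (G_ex a b) F_ex (\<lambda>_. 0) (beta_ex a b)"

lemma beta_ex_nonneg:
  assumes "0 < a" "a < b" "\<alpha> \<in> {e1, e2}"
  shows "0 \<le> beta_ex a b \<theta> \<alpha>"
  using assms beta_pacing_G_ex eq_bid_nonneg paced_val_le_one norm_e1_e2 by simp

lemma beta_ex_le_eq_bid_iff:
  assumes "0 < a" "a < b" "\<alpha> \<in> {e1, e2}" "0 \<le> x" "x \<le> 1"
  shows "beta_ex a b \<theta> \<alpha> \<le> eq_bid x \<longleftrightarrow> paced_val \<alpha> \<theta> \<le> x"
  using assms eq_bid_le_iff beta_pacing_G_ex paced_val_le_one norm_e1_e2 by simp

lemma beta_ex_le_bid:
  assumes a: "0 < a" "a < b" and \<alpha>: "\<alpha> \<in> {e1, e2}" and t: "0 \<le> t"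
  obtains y where "0 \<le> y" "y \<le> 1" "eq_bid y \<le> t"
    "{\<theta>. beta_ex a b \<theta> \<alpha> \<le> t} = {\<theta>. paced_val \<alpha> \<theta> \<le> y}"
proof (cases "eq_bid 1 \<le> t")
  case True
  have "beta_ex a b \<theta> \<alpha> \<le> t" for \<theta>
    using beta_ex_le_eq_bid_iff[OF a \<alpha>, of 1 \<theta>] paced_val_le_one[of \<alpha> \<theta>] norm_e1_e2[OF \<alpha>] True
    by simp
  then show ?thesis
    using that[of 1] True paced_val_le_one norm_e1_e2[OF \<alpha>] by auto
next
  case False
  then obtain y where "0 \<le> y" "y \<le> 1" "eq_bid y = t"
    using eq_bid_attains t by (metis not_le)
  with beta_ex_le_eq_bid_iff[OF a \<alpha>] show ?thesis by (intro that) auto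
qed

text \<open>With n = 2 there is a single opponent, the first coordinate of the product space.\<close>
lemma integral_wins_G_ex:
  assumes a: "0 < a" "a < b" and \<alpha>: "\<alpha> \<in> {e1, e2}" and t: "0 \<le> t" and y: "0 \<le> y" "y \<le> 1"
    and below: "{\<theta>. beta_ex a b \<theta> \<alpha> \<le> t} = {\<theta>. paced_val \<alpha> \<theta> \<le> y}"
  shows "(\<integral>\<theta>s. c * (if wins 2 (\<lambda>_. 0) (beta_ex a b) t \<alpha> \<theta>s then 1 else 0)
           \<partial>PiM {..<(2::nat) - 1} (\<lambda>_. G_ex a b)) = c * arcsin_cdf y"
proof -
  define S where "S = {\<theta>. paced_val \<alpha> \<theta> \<le> y}"
  have "S \<in> sets (G_ex a b)" unfolding S_def G_ex_def by measurable
  have "beta_ex a b \<theta> \<alpha> \<le> t \<longleftrightarrow> paced_val \<alpha> \<theta> \<le> y" for \<theta>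
    using below by blast
  then have ind: "(if wins 2 (\<lambda>_. 0) (beta_ex a b) t \<alpha> \<theta>s then 1 else 0) = indicator S (\<theta>s 0)"
    for \<theta>s :: "nat \<Rightarrow> btype"
    using t by (simp add: wins_def S_def indicator_def)
  have "(\<integral>\<theta>s. c * indicator S (\<theta>s 0) \<partial>PiM {..<(2::nat) - 1} (\<lambda>_. G_ex a b))
      = (\<integral>\<theta>. c * indicator S \<theta> \<partial>distr (PiM {..<(2::nat) - 1} (\<lambda>_. G_ex a b)) (G_ex a b) (\<lambda>\<omega>. \<omega> 0))"
    using \<open>S \<in> sets (G_ex a b)\<close> by (intro integral_distr[symmetric]) auto
  also have "distr (PiM {..<(2::nat) - 1} (\<lambda>_. G_ex a b)) (G_ex a b) (\<lambda>\<omega>. \<omega> 0) = G_ex a b"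
    using prob_space_G_ex[OF a] by (intro distr_PiM_component) auto
  also have "(\<integral>\<theta>. c * indicator S \<theta> \<partial>G_ex a b) = c * measure (G_ex a b) S"
    by (simp add: G_ex_def)
  finally show ?thesis
    using measure_G_ex_paced_val_le[OF a \<alpha> y(2)] y by (simp add: ind S_def)
qed

lemma integral_F_ex: "integral\<^sup>L F_ex (f :: item \<Rightarrow> real) = (f e1 + f e2) / 2"
  unfolding F_ex_def by (subst integral_pmf_of_set) (auto simp: e1_def e2_def)

lemma payment_utility_ex:
  assumes a: "0 < a" "a < b" and bid: "0 \<le> bid e1" "0 \<le> bid e2"
    and y: "0 \<le> y1" "y1 \<le> 1" "0 \<le> y2" "y2 \<le> 1"
    and S1: "{\<theta>. beta_ex a b \<theta> e1 \<le> bid e1} = {\<theta>. paced_val e1 \<theta> \<le> y1}"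
    and S2: "{\<theta>. beta_ex a b \<theta> e2 \<le> bid e2} = {\<theta>. paced_val e2 \<theta> \<le> y2}"
  shows "payment_ex a b bid = (bid e1 * arcsin_cdf y1 + bid e2 * arcsin_cdf y2) / 2"
    and "utility_ex a b \<theta> bid
           = ((val \<theta> e1 - bid e1) * arcsin_cdf y1 + (val \<theta> e2 - bid e2) * arcsin_cdf y2) / 2"
  unfolding exp_payment_def exp_utility_def integral_F_ex
  by (simp_all only: integral_wins_G_ex[OF a _ bid(1) y(1,2) S1] integral_wins_G_ex[OF a _ bid(2) y(3,4) S2]
      insert_iff simp_thms)

lemma AE_G_ex_type: "AE \<theta> in G_ex a b. fst \<theta> \<in> W_ex a b \<and> snd \<theta> = budget_ex (fst \<theta>)"
proof -
  have "AE w in uniform_measure lborel (W_ex a b). w \<in> W_ex a b"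
    by (rule AE_uniform_measureI) auto
  moreover have "{\<theta> \<in> space borel. fst \<theta> \<in> W_ex a b \<and> snd \<theta> = budget_ex (fst \<theta>)}
      \<in> sets (borel :: btype measure)"
    by measurable
  ultimately show ?thesis unfolding G_ex_def
    by (subst AE_distr_iff) auto
qed

lemma W_ex_direction_cosines:
  assumes w: "w \<in> W_ex a b" and a: "0 < a"
  defines "x1 \<equiv> fst w / norm w" and "x2 \<equiv> snd w / norm w"
  shows "0 \<le> x1" "x1 \<le> 1" "0 \<le> x2" "x2 \<le> 1"
    and "sqrt (1 - x1\<^sup>2) = x2" "sqrt (1 - x2\<^sup>2) = x1"
    and "budget_ex w = (2 - x1 - x2) / pi"
proof -
  have pos: "0 < norm w" and nonneg: "0 \<le> fst w" "0 \<le> snd w"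
    using w a by (auto simp: W_ex_def)
  have "x1\<^sup>2 + x2\<^sup>2 = ((fst w)\<^sup>2 + (snd w)\<^sup>2) / (norm w)\<^sup>2"
    by (simp add: x1_def x2_def power_divide add_divide_distrib)
  also have "(fst w)\<^sup>2 + (snd w)\<^sup>2 = (norm w)\<^sup>2"
    using norm_Pair_real[of "fst w" "snd w"] by simp
  finally have sq: "x1\<^sup>2 + x2\<^sup>2 = 1" using pos by simp
  show x: "0 \<le> x1" "0 \<le> x2" using nonneg by (simp_all add: x1_def x2_def)
  have "x1\<^sup>2 \<le> 1" "x2\<^sup>2 \<le> 1" using sq zero_le_power2[of x1] zero_le_power2[of x2] by linarith+
  then have "\<bar>x1\<bar> \<le> 1" "\<bar>x2\<bar> \<le> 1" by (simp_all only: abs_square_le_1)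
  then show "x1 \<le> 1" "x2 \<le> 1" by simp_all
  show "sqrt (1 - x1\<^sup>2) = x2" "sqrt (1 - x2\<^sup>2) = x1" using sq x by (auto intro: real_sqrt_unique)
  show "budget_ex w = (2 - x1 - x2) / pi"
    using pos by (simp add: budget_ex_def x1_def x2_def field_simps)
qed

lemma eq_bid_payment_W_ex:
  assumes "w \<in> W_ex a b" "0 < a"
  defines "x1 \<equiv> fst w / norm w" and "x2 \<equiv> snd w / norm w"
  shows "(eq_bid x1 * arcsin_cdf x1 + eq_bid x2 * arcsin_cdf x2) / 2 = budget_ex w"
proof -
  note x = W_ex_direction_cosines[OF assms(1,2), folded x1_def x2_def]
  have "eq_bid x1 * arcsin_cdf x1 = 2 / pi * (1 - x2)" "eq_bid x2 * arcsin_cdf x2 = 2 / pi * (1 - x1)"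
    using eq_bid_times_arcsin_cdf x by simp_all
  then have "(eq_bid x1 * arcsin_cdf x1 + eq_bid x2 * arcsin_cdf x2) / 2
      = (2 / pi * (1 - x2) + 2 / pi * (1 - x1)) / 2"
    by simp
  also have "\<dots> = (2 - x1 - x2) / pi" by (simp add: field_simps)
  finally show ?thesis by (simp only: x(7))
qed

lemma beta_ex_best_response:
  assumes a: "1 \<le> a" "a < b" and \<theta>: "fst \<theta> \<in> W_ex a b" "snd \<theta> = budget_ex (fst \<theta>)"
  shows "payment_ex a b (beta_ex a b \<theta>) \<le> snd \<theta> \<and>
    (\<forall>bid. (\<forall>\<alpha>\<in>{e1, e2}. 0 \<le> bid \<alpha>) \<and> payment_ex a b bid \<le> snd \<theta>
       \<longrightarrow> utility_ex a b \<theta> bid \<le> utility_ex a b \<theta> (beta_ex a b \<theta>))"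
proof -
  have a0: "0 < a" "a < b" using a by auto
  define \<rho> x1 x2 where "\<rho> = norm (fst \<theta>)" and "x1 = fst (fst \<theta>) / \<rho>" and "x2 = snd (fst \<theta>) / \<rho>"
  note x = W_ex_direction_cosines[OF \<theta>(1) a0(1), folded \<rho>_def, folded x1_def x2_def]
  have \<rho>: "1 \<le> \<rho>" using \<theta>(1) a by (auto simp: W_ex_def \<rho>_def x1_def x2_def)
  have pv: "paced_val e1 \<theta> = x1" "paced_val e2 \<theta> = x2"
    by (simp_all add: paced_val_def inner_e1 inner_e2 \<rho>_def x1_def x2_def)
  have val: "val \<theta> e1 = \<rho> * x1" "val \<theta> e2 = \<rho> * x2"
    using \<rho> by (simp_all add: val_def inner_e1 inner_e2 \<rho>_def x1_def x2_def)
  have budget: "(eq_bid x1 * arcsin_cdf x1 + eq_bid x2 * arcsin_cdf x2) / 2 = snd \<theta>"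
    using eq_bid_payment_W_ex[OF \<theta>(1) a0(1)] \<theta>(2) by (simp add: \<rho>_def x1_def x2_def)
  have beta: "beta_ex a b \<theta> e1 = eq_bid x1" "beta_ex a b \<theta> e2 = eq_bid x2"
    using beta_pacing_G_ex[OF a0] pv by auto
  have "0 \<le> beta_ex a b \<theta> e1" "0 \<le> beta_ex a b \<theta> e2"
    using beta_ex_nonneg[OF a0] by auto
  moreover have "{\<theta>'. beta_ex a b \<theta>' e1 \<le> beta_ex a b \<theta> e1} = {\<theta>'. paced_val e1 \<theta>' \<le> x1}"
    "{\<theta>'. beta_ex a b \<theta>' e2 \<le> beta_ex a b \<theta> e2} = {\<theta>'. paced_val e2 \<theta>' \<le> x2}"
    unfolding beta
    using beta_ex_le_eq_bid_iff[OF a0 _ x(1,2), of e1] beta_ex_le_eq_bid_iff[OF a0 _ x(3,4), of e2]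
    by auto
  ultimately have pu_beta:
    "payment_ex a b (beta_ex a b \<theta>) = (eq_bid x1 * arcsin_cdf x1 + eq_bid x2 * arcsin_cdf x2) / 2"
    "utility_ex a b \<theta> (beta_ex a b \<theta>)
       = ((\<rho> * x1 - eq_bid x1) * arcsin_cdf x1 + (\<rho> * x2 - eq_bid x2) * arcsin_cdf x2) / 2"
    using payment_utility_ex[OF a0 _ _ x(1-4)] by (simp_all add: beta val)
  show ?thesis
  proof (intro conjI allI impI)
    show "payment_ex a b (beta_ex a b \<theta>) \<le> snd \<theta>"
      using pu_beta(1) budget by simp
    fix bid assume bid: "(\<forall>\<alpha>\<in>{e1, e2}. 0 \<le> bid \<alpha>) \<and> payment_ex a b bid \<le> snd \<theta>"
    obtain y1 where y1: "0 \<le> y1" "y1 \<le> 1" "eq_bid y1 \<le> bid e1"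
      "{\<theta>. beta_ex a b \<theta> e1 \<le> bid e1} = {\<theta>. paced_val e1 \<theta> \<le> y1}"
      using beta_ex_le_bid[OF a0, of e1 "bid e1"] bid by auto
    obtain y2 where y2: "0 \<le> y2" "y2 \<le> 1" "eq_bid y2 \<le> bid e2"
      "{\<theta>. beta_ex a b \<theta> e2 \<le> bid e2} = {\<theta>. paced_val e2 \<theta> \<le> y2}"
      using beta_ex_le_bid[OF a0, of e2 "bid e2"] bid by auto
    have "0 \<le> bid e1" "0 \<le> bid e2" using bid by auto
    note pu = payment_utility_ex[OF a0 this y1(1,2) y2(1,2) y1(4) y2(4)]
    have "(\<rho> * x1 - bid e1) * arcsin_cdf y1 + (\<rho> * x2 - bid e2) * arcsin_cdf y2
        \<le> (\<rho> * x1 - eq_bid x1) * arcsin_cdf x1 + (\<rho> * x2 - eq_bid x2) * arcsin_cdf x2"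
      using bid budget pu(1)
      by (intro two_item_lagrangian_le x(1-4) y1(1-3) y2(1-3) \<rho>) auto
    then show "utility_ex a b \<theta> bid \<le> utility_ex a b \<theta> (beta_ex a b \<theta>)"
      unfolding pu(2) pu_beta(2) val by simp
  qed
qed

theorem claim1:
  fixes a b :: real
  assumes "1 \<le> a" and "a < b"
  shows "is_SFPE 2 (G_ex a b) F_ex (Theta_ex a b) {e1, e2} (\<lambda>_. 0)
           (beta_pacing 2 (G_ex a b) mu_ex)"
proof -
  have a: "0 < a" "a < b" using assms by auto
  have "AE \<theta> in G_ex a b. payment_ex a b (beta_ex a b \<theta>) \<le> snd \<theta> \<and>
      (\<forall>bid. (\<forall>\<alpha>\<in>{e1, e2}. 0 \<le> bid \<alpha>) \<and> payment_ex a b bid \<le> snd \<theta>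
         \<longrightarrow> utility_ex a b \<theta> bid \<le> utility_ex a b \<theta> (beta_ex a b \<theta>))"
    using AE_G_ex_type by (rule eventually_mono) (use beta_ex_best_response[OF assms] in blast)
  then show ?thesis
    using beta_ex_nonneg[OF a] unfolding is_SFPE_def by blast
qed

end
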